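(* Let $A$ be an MV-algebra, $d$ a $(\odot,\vee)$-derivation on $A$ and $a\in A$. If $d(a)\in\mathbf{B}(A)$, then $d(d(a))=d(a)$.
   Context: An MV-algebra is an algebra $(A,\oplus,{}^*,0)$ of type $(2,1,0)$ satisfying: $x\oplus(y\oplus z)=(x\oplus y)\oplus z$, $x\oplus y=y\oplus x$, $x\oplus 0=x$, $x^{**}=x$, $x\oplus 0^*=0^*$, $(x^*\oplus y)^*\oplus y=(y^*\oplus x)^*\oplus x$. Put $1=0^*$ and $x\odot y=(x^*\oplus y^* )^*$. The natural order is $x\le y$ iff $x^*\oplus y=1$, with lattice operations $x\vee y=(x\odot y^* )\oplus y$, $x\wedge y=x\odot(x^*\oplus y)$. The Boolean center is $\mathbf{B}(A)=\{x\in A: x\oplus x=x\}$. A $(\odot,\vee)$-derivation on $A$ is a map $d:A\to A$ with $d(x\odot y)=(d(x)\odot y)\vee(x\odot d(y))$ for all $x,y\in A$. *)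

theory Defs
  imports Main
begin

text \<open>MV-algebra (A, oplus, star, 0), with A the whole type 'a.\<close>
locale mv_algebra =
  fixes oplus :: "'a \<Rightarrow> 'a \<Rightarrow> 'a" (infixl "\<oplus>" 65)
    and neg :: "'a \<Rightarrow> 'a"
    and zero :: "'a"
  assumes assoc: "x \<oplus> (y \<oplus> z) = (x \<oplus> y) \<oplus> z"
    and comm: "x \<oplus> y = y \<oplus> x"
    and zero_right: "x \<oplus> zero = x"
    and neg_neg: "neg (neg x) = x"
    and absorb: "x \<oplus> neg zero = neg zero"
    and luk: "neg (neg x \<oplus> y) \<oplus> y = neg (neg y \<oplus> x) \<oplus> x"
begin

definition one :: 'a where "one = neg zero"
definition odot :: "'a \<Rightarrow> 'a \<Rightarrow> 'a" (infixl "\<odot>" 70)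
  where "x \<odot> y = neg (neg x \<oplus> neg y)"
definition le :: "'a \<Rightarrow> 'a \<Rightarrow> bool" where "le x y \<longleftrightarrow> neg x \<oplus> y = one"
definition join :: "'a \<Rightarrow> 'a \<Rightarrow> 'a" where "join x y = (x \<odot> neg y) \<oplus> y"
definition meet :: "'a \<Rightarrow> 'a \<Rightarrow> 'a" where "meet x y = x \<odot> (neg x \<oplus> y)"
definition boolean_center :: "'a set" where "boolean_center = {x. x \<oplus> x = x}"
definition odot_join_derivation :: "('a \<Rightarrow> 'a) \<Rightarrow> bool" where
  "odot_join_derivation d \<longleftrightarrow> (\<forall>x y. d (x \<odot> y) = join (d x \<odot> y) (x \<odot> d y))"

end

end

theory Submission
  imports Defs
begin

text \<open>A \<open>(\<odot>,\<or>)\<close>-derivation satisfies \<open>d 0 = 0\<close>, hence \<open>d x \<odot> x\<^sup>* = d (x \<odot> x\<^sup>*) = 0\<close>,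
  i.e. \<open>d x \<le> x\<close>. If \<open>b = d a\<close> is Boolean, then \<open>b \<le> a\<close> gives \<open>a \<odot> b = b\<close> and \<open>b \<odot> b = b\<close>, so
  \<open>d b = d (a \<odot> b) = b \<or> (a \<odot> d b) \<ge> b\<close>; together with \<open>d b \<le> b\<close> this yields \<open>d b = b\<close>.\<close>

context mv_algebra
begin

sublocale oplus: abel_semigroup oplus
  by unfold_locales (rule assoc[symmetric], rule comm)

lemma zero_left: "zero \<oplus> x = x"
  using comm zero_right by metis

lemma one_right: "x \<oplus> one = one"
  unfolding one_def by (rule absorb)

lemma one_left: "one \<oplus> x = one"
  using comm one_right by metis

lemma neg_one: "neg one = zero"
  unfolding one_def by (rule neg_neg)

lemma neg_oplus_self: "neg x \<oplus> x = one"
  using luk[of x one] by (simp add: one_right neg_one zero_left)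

lemma odot_zero: "x \<odot> zero = zero"
  unfolding odot_def by (metis neg_one one_def one_right)

lemma zero_odot: "zero \<odot> x = zero"
  unfolding odot_def by (metis comm neg_one one_def one_right)

lemma odot_neg_self: "x \<odot> neg x = zero"
  unfolding odot_def by (metis comm neg_neg neg_oplus_self neg_one)

lemma join_zero: "join zero zero = zero"
  unfolding join_def by (simp add: zero_odot zero_right)

lemma join_comm: "join x y = join y x"
  unfolding join_def odot_def using luk by (simp add: neg_neg)

lemma neg_eq_zero_iff: "neg x = zero \<longleftrightarrow> x = one"
  by (metis neg_neg neg_one)

lemma neg_eq_one_iff: "neg x = one \<longleftrightarrow> x = zero"
  by (metis neg_neg neg_one)

lemma le_iff_odot_neg: "le x y \<longleftrightarrow> x \<odot> neg y = zero"
  unfolding le_def odot_def by (simp add: neg_neg neg_eq_zero_iff)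

lemma le_antisym:
  assumes "le x y" and "le y x"
  shows "x = y"
  using assms luk[of x y] unfolding le_def by (simp add: neg_one zero_left)

lemma le_zero_iff: "le x zero \<longleftrightarrow> x = zero"
  unfolding le_def by (simp add: zero_right neg_eq_one_iff)

lemma le_join_left: "le x (join x y)"
proof -
  have "neg x \<oplus> join x y = (neg x \<oplus> x) \<oplus> (y \<odot> neg x)"
    by (subst join_comm) (simp add: join_def ac_simps)
  then show ?thesis
    unfolding le_def by (simp add: neg_oplus_self one_left)
qed

lemma odot_le_right: "le (x \<odot> y) y"
  unfolding le_def odot_def
  by (simp add: neg_neg assoc[symmetric] neg_oplus_self one_right)

lemma boolean_center_odot_self:
  assumes "b \<in> boolean_center"
  shows "b \<odot> b = b"
proof (rule le_antisym)
  show "le (b \<odot> b) b" by (rule odot_le_right)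
  have "join b (neg b) = one"
    using assms join_comm[of b "neg b"]
    unfolding join_def odot_def boolean_center_def by (simp add: neg_neg neg_oplus_self)
  then show "le b (b \<odot> b)"
    unfolding le_def join_def by (simp add: neg_neg comm)
qed

lemma boolean_center_neg:
  assumes "b \<in> boolean_center"
  shows "neg b \<in> boolean_center"
  using arg_cong[OF boolean_center_odot_self[OF assms], of neg]
  unfolding boolean_center_def odot_def by (simp add: neg_neg)

lemma boolean_center_odot_eq:
  assumes b: "b \<in> boolean_center" and "le b a"
  shows "a \<odot> b = b"
proof (rule le_antisym)
  show "le (a \<odot> b) b" by (rule odot_le_right)
  let ?t = "join a (neg b)"
  have t: "?t = neg b \<oplus> (a \<odot> b)"
    unfolding join_def by (simp add: neg_neg comm)
  have "neg b \<oplus> ?t = ?t"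
    using boolean_center_neg[OF b] unfolding t assoc boolean_center_def by simp
  moreover have "neg b \<oplus> join (neg b) a = (neg b \<oplus> a) \<oplus> (neg b \<odot> neg a)"
    by (simp add: join_def ac_simps)
  then have "neg b \<oplus> ?t = one"
    using \<open>le b a\<close> join_comm[of a] unfolding le_def by (simp add: one_left)
  ultimately show "le b (a \<odot> b)"
    unfolding le_def t by simp
qed

context
  fixes d :: "'a \<Rightarrow> 'a"
  assumes derivation: "odot_join_derivation d"
begin

lemma derivation_odot: "d (x \<odot> y) = join (d x \<odot> y) (x \<odot> d y)"
  using derivation unfolding odot_join_derivation_def by blast

lemma derivation_zero: "d zero = zero"
  using derivation_odot[of zero zero] by (simp add: odot_zero zero_odot join_zero)

lemma derivation_le: "le (d x) x"
proof -
  have "join (d x \<odot> neg x) (x \<odot> d (neg x)) = zero"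
    using derivation_odot[of x "neg x"] by (simp add: odot_neg_self derivation_zero)
  then have "d x \<odot> neg x = zero"
    using le_join_left le_zero_iff by metis
  then show ?thesis
    by (simp add: le_iff_odot_neg)
qed

lemma derivation_idem_if_boolean:
  assumes "d a \<in> boolean_center"
  shows "d (d a) = d a"
proof -
  let ?b = "d a"
  have "a \<odot> ?b = ?b"
    using boolean_center_odot_eq[OF assms derivation_le] .
  then have "d ?b = join ?b (a \<odot> d ?b)"
    using derivation_odot[of a ?b] boolean_center_odot_self[OF assms] by simp
  then have "le ?b (d ?b)"
    using le_join_left by metis
  then show ?thesis
    using le_antisym derivation_le by blast
qed

end

end

theorem proposition3p8:
  fixes oplus :: "'a \<Rightarrow> 'a \<Rightarrow> 'a" and neg :: "'a \<Rightarrow> 'a" and zero :: 'a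
    and d :: "'a \<Rightarrow> 'a" and a :: 'a
  assumes "mv_algebra oplus neg zero"
    and "mv_algebra.odot_join_derivation oplus neg d"
    and "d a \<in> mv_algebra.boolean_center oplus"
  shows "d (d a) = d a"
  using mv_algebra.derivation_idem_if_boolean[OF assms] .

end
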